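(* Let $p\ge5$, $n\ge0$, and let $\mu<\nu$ be two integers in $\{M_{n-1}+1,\dots,M_n\}$ whose nzm-codes both end with the digit $1$, such that no integer strictly between $\mu$ and $\nu$ has an nzm-code ending with $1$. Then $\nu-\mu=p-3$ if and only if the nzm-code of $\nu$ ends with $11$; otherwise $\nu-\mu=p-2$.
   Context: Fix $p\ge5$. Metallic numbers: $m_{-1}=0$, $m_0=1$, $m_{n+2}=(p-2)m_{n+1}-m_n$; $M_n=\sum_{k=0}^n m_k$, $M_{-1}=0$. Write $x=p-2$, $d=p-3$. The nzm-code of a positive integer $n$ is the unique word $a_k\cdots a_0$ over the digits $\{1,\dots,p-2\}$ with $n=\sum a_i m_i$ containing no factor $x\,d^j\,x$ ($j\ge0$). *)

theory Defs
  imports Main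
begin

text \<open>Metallic numbers m_n (n >= 0); m_{-1} = 0 is implicit in m_1 = (p-2)*m_0 - m_{-1} = p-2.\<close>
fun metal :: "int \<Rightarrow> nat \<Rightarrow> int" where
  "metal p 0 = 1"
| "metal p (Suc 0) = p - 2"
| "metal p (Suc (Suc n)) = (p - 2) * metal p (Suc n) - metal p n"

definition Msum :: "int \<Rightarrow> int \<Rightarrow> int" where
  "Msum p k = (if k < 0 then 0 else (\<Sum>i\<le>nat k. metal p i))"

text \<open>Words are stored little-endian: the list w represents a_k ... a_0 with w ! i = a_i,
  so hd w is the last digit a_0.\<close>
definition word_val :: "int \<Rightarrow> int list \<Rightarrow> int" where
  "word_val p w = (\<Sum>i<length w. w ! i * metal p i)"

definition nzm_word :: "int \<Rightarrow> int list \<Rightarrow> bool" where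
  "nzm_word p w \<longleftrightarrow> (\<forall>a\<in>set w. 1 \<le> a \<and> a \<le> p - 2) \<and>
     \<not> (\<exists>u v j. w = u @ [p - 2] @ replicate j (p - 3) @ [p - 2] @ v)"

definition nzm_code :: "int \<Rightarrow> int \<Rightarrow> int list" where
  "nzm_code p n = (THE w. nzm_word p w \<and> word_val p w = n)"

end

theory Submission
  imports Defs
begin

(* Write x = p - 2 and d = p - 3. An nzm-word of length k has value at least M_(k-1) and
  less than M_k, so codes are unique; adding 1 to a code either raises its last digit or turns
  a tail d^j x b into 1^(j+1) (b+1), by the identity d^j x + 1 = 1^(j+2) of the numeration.
  If the code of mu is 1 r, the codes of mu + 1, ..., mu + p - 4 are 2 r, ..., d r. When r may
  follow an x, the code of mu + p - 3 is x r and that of mu + p - 2 is 1 (b+1) r' for r = b r';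
  otherwise r = d^j x v and the code of mu + p - 3 begins with 1^(j+2). The hypotheses placing
  mu and nu between M_(n-1) and M_n only serve to exclude mu = 1, i.e. r = []. *)

lemma metal_growth:
  assumes "p \<ge> 4"
  shows "1 \<le> metal p k \<and> (p - 3) * metal p k \<le> metal p (Suc k)"
proof (induction k)
  case 0
  then show ?case by simp
next
  case (Suc k)
  have "metal p k \<le> (p - 3) * metal p k"
    using Suc.IH assms mult_right_mono[of 1 "p - 3" "metal p k"] by simp
  with Suc.IH have "metal p k \<le> metal p (Suc k)" by linarith
  moreover have "1 \<le> (p - 3) * metal p k"
    using Suc.IH assms mult_mono[of 1 "p - 3" 1 "metal p k"] by simp
  ultimately show ?case
    using Suc.IH by (simp add: algebra_simps)
qed

lemma metal_ge_one: "p \<ge> 4 \<Longrightarrow> 1 \<le> metal p k"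
  using metal_growth by blast

lemma metal_nonneg: "p \<ge> 4 \<Longrightarrow> 0 \<le> metal p k"
  using metal_ge_one[of p k] by simp

lemma metal_Suc_ge: "p \<ge> 4 \<Longrightarrow> (p - 3) * metal p k \<le> metal p (Suc k)"
  using metal_growth by blast

(* metal_psum p k is M_(k-1). *)
definition metal_psum :: "int \<Rightarrow> nat \<Rightarrow> int" where
  "metal_psum p k = (\<Sum>i<k. metal p i)"

lemma metal_psum_0 [simp]: "metal_psum p 0 = 0"
  by (simp add: metal_psum_def)

lemma metal_psum_Suc: "metal_psum p (Suc k) = metal_psum p k + metal p k"
  by (simp add: metal_psum_def)

lemma metal_psum_nonneg: "p \<ge> 4 \<Longrightarrow> 0 \<le> metal_psum p k"
  unfolding metal_psum_def by (rule sum_nonneg) (use metal_nonneg in auto)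

lemma metal_psum_mono: "p \<ge> 4 \<Longrightarrow> k \<le> l \<Longrightarrow> metal_psum p k \<le> metal_psum p l"
  unfolding metal_psum_def by (rule sum_mono2) (use metal_nonneg in auto)

lemma metal_psum_Suc_Suc:
  "metal_psum p (Suc (Suc k)) = 1 + (p - 2) * metal p k + (p - 3) * metal_psum p k"
  by (induction k) (simp_all add: metal_psum_Suc algebra_simps)

lemma Msum_ge_one: "p \<ge> 4 \<Longrightarrow> 0 \<le> k \<Longrightarrow> 1 \<le> Msum p k"
  using metal_psum_nonneg[of p "nat k"] metal_ge_one[of p "nat k"]
  by (simp add: Msum_def metal_psum_def lessThan_Suc_atMost [symmetric])

lemma word_val_Nil [simp]: "word_val p [] = 0"
  by (simp add: word_val_def)

lemma word_val_snoc: "word_val p (w @ [a]) = word_val p w + a * metal p (length w)"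
  by (simp add: word_val_def nth_append)

lemma word_val_singleton [simp]: "word_val p [a] = a"
  using word_val_snoc[of p "[]" a] by simp

lemma word_val_replicate: "word_val p (replicate k c) = c * metal_psum p k"
  by (induction k) (simp_all add: word_val_snoc metal_psum_Suc algebra_simps flip: replicate_append_same)

lemma word_val_append_same_length:
  "length u = length u' \<Longrightarrow> word_val p (u @ v) - word_val p (u' @ v) = word_val p u - word_val p u'"
  by (induction v rule: rev_induct) (simp_all add: word_val_snoc flip: append_assoc)

lemma word_val_Cons_digit: "word_val p (a # w) = word_val p (b # w) + (a - b)"
  using word_val_append_same_length[of "[a]" "[b]" p w] by simp

lemma word_val_carry:
  "word_val p (replicate (Suc j) 1 @ (b + 1) # r) =
     word_val p (replicate j (p - 3) @ (p - 2) # b # r) + 1"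
proof -
  have ones: "word_val p (replicate (Suc j) 1 @ [b + 1])
      = metal_psum p (Suc j) + (b + 1) * metal p (Suc j)"
    by (simp only: word_val_snoc word_val_replicate length_replicate)
  have digits: "word_val p ((replicate j (p - 3) @ [p - 2]) @ [b])
      = (p - 3) * metal_psum p j + (p - 2) * metal p j + b * metal p (Suc j)"
    by (simp only: word_val_snoc word_val_replicate length_replicate length_append) simp
  have "word_val p (replicate (Suc j) 1 @ [b + 1]) = word_val p (replicate j (p - 3) @ [p - 2, b]) + 1"
    using ones digits metal_psum_Suc_Suc[of p j] metal_psum_Suc[of p "Suc j"] by (simp add: algebra_simps)
  then show ?thesis
    using word_val_append_same_length
        [of "replicate (Suc j) 1 @ [b + 1]" "replicate j (p - 3) @ [p - 2, b]" p r]
    by simp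
qed

lemma word_val_carry_top:
  "word_val p (replicate (Suc (Suc j)) 1) = word_val p (replicate j (p - 3) @ [p - 2]) + 1"
  by (simp only: word_val_snoc word_val_replicate metal_psum_Suc_Suc length_replicate) simp

(* after_x: the digits read so far (from a_0 upwards) end in x d^j, so a further x is forbidden. *)
fun admissible :: "int \<Rightarrow> bool \<Rightarrow> int list \<Rightarrow> bool" where
  "admissible p after_x [] = True"
| "admissible p after_x (a # w) \<longleftrightarrow> 1 \<le> a \<and> a \<le> p - 2 \<and>
     (if a = p - 2 then \<not> after_x \<and> admissible p True w
      else if a = p - 3 then admissible p after_x w
      else admissible p False w)"

lemma admissible_x_Cons:
  "p \<ge> 3 \<Longrightarrow> admissible p after_x ((p - 2) # w) \<longleftrightarrow> \<not> after_x \<and> admissible p True w"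
  by simp

lemma Cons_has_xdx_factor_iff:
  "(\<exists>u v j. a # w = u @ x # replicate j d @ x # v) \<longleftrightarrow>
     (\<exists>u v j. w = u @ x # replicate j d @ x # v) \<or> (a = x \<and> (\<exists>j v. w = replicate j d @ x # v))"
    (is "?factor (a # w) \<longleftrightarrow> ?factor w \<or> ?start")
proof
  assume "?factor (a # w)"
  then obtain u v j where "a # w = u @ x # replicate j d @ x # v" by blast
  then show "?factor w \<or> ?start"
    by (cases u) fastforce+
next
  assume "?factor w \<or> ?start"
  then show "?factor (a # w)"
    by (metis append_Cons append_Nil)
qed

lemma Cons_eq_replicate_append_Cons_iff:
  assumes "x \<noteq> d"
  shows "(\<exists>j v. a # w = replicate j d @ x # v) \<longleftrightarrow>
     a = x \<or> (a = d \<and> (\<exists>j v. w = replicate j d @ x # v))"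
proof
  assume "\<exists>j v. a # w = replicate j d @ x # v"
  then obtain j v where "a # w = replicate j d @ x # v" by blast
  then show "a = x \<or> (a = d \<and> (\<exists>j v. w = replicate j d @ x # v))"
    by (cases j) auto
next
  assume "a = x \<or> (a = d \<and> (\<exists>j v. w = replicate j d @ x # v))"
  then show "\<exists>j v. a # w = replicate j d @ x # v"
    by (metis append_Nil replicate_0 replicate_Suc append_Cons)
qed

lemma admissible_iff:
  "admissible p after_x w \<longleftrightarrow>
     nzm_word p w \<and> (after_x \<longrightarrow> \<not> (\<exists>j v. w = replicate j (p - 3) @ (p - 2) # v))"
proof (induction w arbitrary: after_x)
  case Nil
  then show ?case by (simp add: nzm_word_def)
next
  case (Cons a w)
  have "p - 2 \<noteq> p - 3" by simp
  note start_iff = Cons_eq_replicate_append_Cons_iff[OF this]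
  show ?case
    unfolding nzm_word_def append_Cons append_Nil Cons_has_xdx_factor_iff start_iff
    using Cons.IH[of True] Cons.IH[of False] Cons.IH[of after_x]
    by (auto simp: nzm_word_def)
qed

lemma nzm_word_iff_admissible: "nzm_word p w \<longleftrightarrow> admissible p False w"
  by (simp add: admissible_iff)

lemma admissible_relax: "admissible p after_x w \<Longrightarrow> admissible p False w"
  by (simp add: admissible_iff)

lemma rev_has_xdx_factor_iff:
  "(\<exists>u v j. rev w = u @ x # replicate j d @ x # v) \<longleftrightarrow>
     (\<exists>u v j. w = u @ x # replicate j d @ x # v)"
proof
  assume "\<exists>u v j. rev w = u @ x # replicate j d @ x # v"
  then obtain u v j where "rev w = u @ x # replicate j d @ x # v" by blast
  then have "w = rev v @ x # replicate j d @ x # rev u" by (simp add: rev_swap)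
  then show "\<exists>u v j. w = u @ x # replicate j d @ x # v" by blast
next
  assume "\<exists>u v j. w = u @ x # replicate j d @ x # v"
  then obtain u v j where "w = u @ x # replicate j d @ x # v" by blast
  then have "rev w = rev v @ x # replicate j d @ x # rev u" by simp
  then show "\<exists>u v j. rev w = u @ x # replicate j d @ x # v" by blast
qed

lemma nzm_word_rev [simp]: "nzm_word p (rev w) \<longleftrightarrow> nzm_word p w"
  by (simp add: nzm_word_def rev_has_xdx_factor_iff)

lemma word_val_ge_metal_psum:
  assumes "p \<ge> 4" and "\<forall>a\<in>set w. 1 \<le> a"
  shows "metal_psum p (length w) \<le> word_val p w"
  using assms(2)
proof (induction w rule: rev_induct)
  case Nil
  then show ?case by simp
next
  case (snoc a w)
  have "metal p (length w) \<le> a * metal p (length w)"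
    using snoc.prems metal_nonneg[OF assms(1)] mult_right_mono[of 1 a "metal p (length w)"] by simp
  then show ?case
    using snoc by (simp add: word_val_snoc metal_psum_Suc)
qed

(* rev w reads w from its leading digit, so here after_x means that w sits right below a block x d^j. *)
lemma word_val_upper_bound:
  assumes "p \<ge> 4" and "admissible p after_x (rev w)"
  shows "word_val p w \<le> (if after_x then (p - 3) * metal_psum p (length w)
                          else metal_psum p (Suc (length w)) - 1)"
  using assms(2)
proof (induction w arbitrary: after_x rule: rev_induct)
  case Nil
  then show ?case by (simp add: metal_psum_Suc)
next
  case (snoc a w)
  define m S where "m = metal p (length w)" and "S = metal_psum p (length w)"
  have adm: "admissible p after_x (a # rev w)"
    using snoc.prems by simp
  have m: "1 \<le> m" "(p - 3) * m \<le> metal p (Suc (length w))"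
    using metal_ge_one metal_Suc_ge assms(1) by (auto simp: m_def)
  have val: "word_val p (w @ [a]) = word_val p w + a * m"
    by (simp add: word_val_snoc m_def)
  have psum: "metal_psum p (length (w @ [a])) = S + m"
      "metal_psum p (Suc (length (w @ [a]))) = S + m + metal p (Suc (length w))"
    by (simp_all add: metal_psum_Suc S_def m_def)
  have "admissible p False (rev w)"
    using adm admissible_relax by (auto split: if_splits)
  from snoc.IH[OF this] have IH_False: "word_val p w \<le> S + m - 1"
    by (simp add: S_def m_def metal_psum_Suc)
  consider "a = p - 2" | "a = p - 3" | "1 \<le> a" "a \<le> p - 4"
    using adm by (auto split: if_splits)
  then have "word_val p (w @ [a]) \<le>
      (if after_x then (p - 3) * (S + m) else S + m + metal p (Suc (length w)) - 1)"
  proof cases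
    case 1
    with adm have "\<not> after_x" and "admissible p True (rev w)" by auto
    from snoc.IH[OF this(2)] have "word_val p w \<le> (p - 3) * S" by (simp add: S_def)
    moreover have "metal_psum p (Suc (Suc (length w))) = 1 + (p - 2) * m + (p - 3) * S"
      by (simp add: metal_psum_Suc_Suc m_def S_def)
    ultimately show ?thesis
      using \<open>\<not> after_x\<close> val 1 by (simp add: metal_psum_Suc m_def S_def)
  next
    case 2
    with adm have "admissible p after_x (rev w)" by auto
    from snoc.IH[OF this] have "after_x \<Longrightarrow> word_val p w \<le> (p - 3) * S" by (simp add: S_def)
    then show ?thesis
      using val 2 IH_False m by (auto simp: algebra_simps)
  next
    case 3
    have "S \<le> (p - 3) * S"
      using metal_psum_nonneg[OF assms(1)] assms(1) mult_right_mono[of 1 "p - 3" S] by (simp add: S_def)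
    moreover have "a * m \<le> (p - 4) * m" using mult_right_mono[OF 3(2)] m by simp
    ultimately show ?thesis
      using val IH_False m by (auto simp: algebra_simps)
  qed
  then show ?case
    using psum by (cases after_x) (simp_all add: algebra_simps)
qed

lemma nzm_word_prefix:
  assumes "nzm_word p (u @ v)"
  shows "nzm_word p u"
proof -
  have "u @ v \<noteq> w1 @ [p - 2] @ replicate j (p - 3) @ [p - 2] @ w2" for w1 w2 j
    using assms by (simp add: nzm_word_def)
  then have "u \<noteq> w1 @ [p - 2] @ replicate j (p - 3) @ [p - 2] @ w2" for w1 w2 j
    by (metis append_assoc)
  with assms show "nzm_word p u"
    by (simp add: nzm_word_def)
qed

lemma nzm_word_val_bounds:
  assumes "p \<ge> 4" and "nzm_word p w"
  shows "metal_psum p (length w) \<le> word_val p w \<and> word_val p w < metal_psum p (Suc (length w))"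
proof -
  have "\<forall>a\<in>set w. 1 \<le> a"
    using assms(2) by (simp add: nzm_word_def)
  moreover have "admissible p False (rev w)"
    using assms(2) by (simp flip: nzm_word_iff_admissible)
  ultimately show ?thesis
    using word_val_ge_metal_psum[OF assms(1)] word_val_upper_bound[OF assms(1)] by fastforce
qed

lemma nzm_word_val_inj_same_length:
  assumes "p \<ge> 4" and "nzm_word p u" "nzm_word p v" "length u = length v" "word_val p u = word_val p v"
  shows "u = v"
  using assms(2-5)
proof (induction u arbitrary: v rule: rev_induct)
  case Nil
  then show ?case by simp
next
  case (snoc a u)
  obtain b v' where v: "v = v' @ [b]"
    using snoc.prems(3) by (cases v rule: rev_exhaust) auto
  have nzm: "nzm_word p u" "nzm_word p v'"
    using snoc.prems(1,2) v nzm_word_prefix by blast+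
  have len: "length v' = length u"
    using snoc.prems(3) v by simp
  define m where "m = metal p (length u)"
  have "1 \<le> m" using metal_ge_one assms(1) by (simp add: m_def)
  have eq: "word_val p u + a * m = word_val p v' + b * m"
    using snoc.prems(4) v len by (simp add: word_val_snoc m_def)
  have "word_val p u < metal_psum p (length u) + m" "word_val p v' < metal_psum p (length u) + m"
      "metal_psum p (length u) \<le> word_val p u" "metal_psum p (length u) \<le> word_val p v'"
    using nzm_word_val_bounds[OF assms(1) nzm(1)] nzm_word_val_bounds[OF assms(1) nzm(2)] len
    by (simp_all add: metal_psum_Suc m_def)
  then have "a * m - b * m < 1 * m" "b * m - a * m < 1 * m"
    using eq by linarith+
  then have "(a - b) * m < 1 * m" "(b - a) * m < 1 * m"
    by (simp_all only: left_diff_distrib)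
  then have "a - b < 1" "b - a < 1"
    using \<open>1 \<le> m\<close> mult_less_cancel_right_pos[of m] by simp_all
  then have "a = b" by linarith
  with eq have "word_val p u = word_val p v'" by simp
  with snoc.IH[OF nzm len [symmetric]] show ?case
    using v \<open>a = b\<close> by simp
qed

lemma nzm_word_val_inj:
  assumes "p \<ge> 4" and "nzm_word p u" "nzm_word p v" "word_val p u = word_val p v"
  shows "u = v"
proof -
  have "length u = length v"
  proof (rule ccontr)
    assume "length u \<noteq> length v"
    then consider "Suc (length u) \<le> length v" | "Suc (length v) \<le> length u" by linarith
    then show False
      using nzm_word_val_bounds[OF assms(1) assms(2)] nzm_word_val_bounds[OF assms(1) assms(3)] assms(4)
        metal_psum_mono[OF assms(1)] by cases fastforce+
  qed
  with nzm_word_val_inj_same_length assms show ?thesis by blast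
qed

lemma nzm_code_word_val:
  assumes "p \<ge> 4" and "nzm_word p w"
  shows "nzm_code p (word_val p w) = w"
  unfolding nzm_code_def
  by (rule the_equality) (use assms nzm_word_val_inj in auto)

lemma admissible_replicate_append:
  "p \<ge> 4 \<Longrightarrow> admissible p after_x (replicate j (p - 3) @ w) \<longleftrightarrow> admissible p after_x w"
  by (induction j) auto

lemma admissible_ones_append:
  "p \<ge> 5 \<Longrightarrow> admissible p after_x (replicate j 1 @ w) \<longleftrightarrow> admissible p (after_x \<and> j = 0) w"
  by (induction j arbitrary: after_x) auto

lemma nzm_word_ones: "p \<ge> 5 \<Longrightarrow> nzm_word p (replicate n 1)"
  using admissible_ones_append[where w = "[]"] by (simp add: nzm_word_iff_admissible)

lemma nzm_word_carry:
  assumes "p \<ge> 5" and "nzm_word p (replicate j (p - 3) @ (p - 2) # b # r)"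
  shows "nzm_word p (replicate (Suc j) 1 @ (b + 1) # r)"
proof -
  have "admissible p False ((p - 2) # b # r)"
    using assms admissible_replicate_append[of p False j]
    by (simp add: nzm_word_iff_admissible del: admissible.simps)
  then have "1 \<le> b" "b \<le> p - 3" "if b = p - 3 then admissible p True r else admissible p False r"
    by (auto split: if_splits)
  then have "admissible p False ((b + 1) # r)"
    by (cases "b = p - 3") auto
  then show ?thesis
    by (simp only: nzm_word_iff_admissible admissible_ones_append[OF assms(1)] simp_thms)
qed

lemma nzm_word_carry_succ:
  assumes "p \<ge> 5" and "nzm_word p (replicate j (p - 3) @ (p - 2) # v)"
  obtains u where "nzm_word p (replicate (Suc j) 1 @ u)"
    and "word_val p (replicate (Suc j) 1 @ u) = word_val p (replicate j (p - 3) @ (p - 2) # v) + 1"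
proof (cases v)
  case Nil
  then show thesis
    using that[of "[1]"] nzm_word_ones[OF assms(1), of "Suc (Suc j)"] word_val_carry_top[of p j]
    by (simp add: replicate_append_same)
next
  case (Cons b r)
  then show thesis
    using that[of "(b + 1) # r"] nzm_word_carry[OF assms(1) assms(2)[unfolded Cons]] word_val_carry[of p j b r]
    by simp
qed

lemma nzm_word_Cons_cases:
  assumes "nzm_word p (a # r)"
  obtains (digit) "1 \<le> a" "a \<le> p - 4" "admissible p False r"
    | (top_digit) "a = p - 3" "admissible p True r"
    | (carry) j v where "a # r = replicate j (p - 3) @ (p - 2) # v"
proof -
  have adm: "admissible p False (a # r)"
    using assms by (simp add: nzm_word_iff_admissible del: admissible.simps)
  have "1 \<le> a" "a \<le> p - 2"
    using adm by auto
  then consider "a = p - 2" | "a = p - 3" | "1 \<le> a" "a \<le> p - 4"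
    by linarith
  then show thesis
  proof cases
    case 1
    then show thesis
      using carry[of 0 r] by simp
  next
    case 2
    with adm have "admissible p False r" by simp
    then consider "admissible p True r" | j v where "r = replicate j (p - 3) @ (p - 2) # v"
      using admissible_iff[of p True r] by (auto simp: nzm_word_iff_admissible)
    then show thesis
      using top_digit carry[of "Suc _"] 2 by cases auto
  next
    case 3
    with adm show thesis
      using digit by simp
  qed
qed

lemma nzm_word_succ:
  assumes "p \<ge> 5" and "nzm_word p w"
  obtains w' where "nzm_word p w'" and "word_val p w' = word_val p w + 1"
proof (cases w)
  case Nil
  then show thesis
    using that[of "[1]"] assms(1) by (simp add: nzm_word_def)
next
  case (Cons a r)
  from assms(2)[unfolded Cons] show thesis
  proof (cases rule: nzm_word_Cons_cases)
    case digit
    then have "nzm_word p ((a + 1) # r)"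
      by (simp add: nzm_word_iff_admissible)
    then show thesis
      using that word_val_Cons_digit[of p "a + 1" r a] Cons by simp
  next
    case top_digit
    then have "nzm_word p ((p - 2) # r)"
      using assms(1) by (simp add: nzm_word_iff_admissible)
    then show thesis
      using that word_val_Cons_digit[of p "p - 2" r a] Cons top_digit by simp
  next
    case (carry j v)
    then show thesis
      using nzm_word_carry_succ[OF assms(1)] that assms(2) Cons by metis
  qed
qed

lemma nzm_word_exists:
  assumes "p \<ge> 5" and "1 \<le> n"
  shows "\<exists>w. nzm_word p w \<and> word_val p w = n"
  using assms(2)
proof (induction n rule: int_ge_induct)
  case base
  show ?case
    using assms(1) by (intro exI[of _ "[1]"]) (simp add: nzm_word_def)
next
  case (step n)
  then show ?case
    using nzm_word_succ[OF assms(1)] by metis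
qed

lemma nzm_code_spec:
  assumes "p \<ge> 5" and "1 \<le> n"
  shows "nzm_word p (nzm_code p n) \<and> word_val p (nzm_code p n) = n"
  using nzm_word_exists[OF assms] nzm_code_word_val assms(1) by fastforce

lemma nzm_code_replace_last_digit:
  assumes "p \<ge> 5" and "nzm_word p (1 # r)" and "1 \<le> c" "c \<le> p - 3"
  shows "nzm_code p (word_val p (1 # r) + (c - 1)) = c # r"
proof -
  have "admissible p False r"
    using assms(1,2) by (simp add: nzm_word_iff_admissible)
  then have "nzm_word p (c # r)"
    using assms(3,4) by (simp add: nzm_word_iff_admissible)
  then show ?thesis
    using nzm_code_word_val[of p "c # r"] word_val_Cons_digit[of p c r 1] assms(1) by simp
qed

lemma nzm_code_after_one_free_tail:
  assumes p: "p \<ge> 5" and "nzm_word p (1 # b # r)" and "admissible p True (b # r)"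
  shows "nzm_code p (word_val p (1 # b # r) + (p - 3)) = (p - 2) # b # r"
    and "nzm_code p (word_val p (1 # b # r) + (p - 2)) = 1 # (b + 1) # r"
proof -
  have x_r: "nzm_word p ((p - 2) # b # r)"
    using assms(3) p by (simp add: nzm_word_iff_admissible admissible_x_Cons del: admissible.simps)
  then show "nzm_code p (word_val p (1 # b # r) + (p - 3)) = (p - 2) # b # r"
    using nzm_code_word_val[of p "(p - 2) # b # r"] word_val_Cons_digit[of p "p - 2" "b # r" 1] p by simp
  have "nzm_word p (1 # (b + 1) # r)"
    using nzm_word_carry[OF p, of 0 b r] x_r by simp
  then show "nzm_code p (word_val p (1 # b # r) + (p - 2)) = 1 # (b + 1) # r"
    using nzm_code_word_val[of p "1 # (b + 1) # r"] word_val_carry[of p 0 b r]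
      word_val_Cons_digit[of p "p - 2" "b # r" 1] p by (simp add: add_diff_eq)
qed

lemma nzm_code_after_one_blocked_tail:
  assumes p: "p \<ge> 5" and "nzm_word p (1 # r)" and "\<not> admissible p True r"
  shows "take 2 (nzm_code p (word_val p (1 # r) + (p - 3))) = [1, 1]"
proof -
  have adm: "admissible p False r"
    using assms(2) p by (simp add: nzm_word_iff_admissible)
  then obtain j v where r: "r = replicate j (p - 3) @ (p - 2) # v"
    using admissible_iff[of p True r] assms(3) by (auto simp: nzm_word_iff_admissible)
  have d_r: "nzm_word p (replicate (Suc j) (p - 3) @ (p - 2) # v)"
    using adm r p by (simp add: nzm_word_iff_admissible)
  have "word_val p (replicate (Suc j) (p - 3) @ (p - 2) # v) + 1 = word_val p (1 # r) + (p - 3)"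
    using word_val_Cons_digit[of p "p - 3" r 1] r by simp
  then obtain u where "nzm_word p (replicate (Suc (Suc j)) 1 @ u)"
    and "word_val p (replicate (Suc (Suc j)) 1 @ u) = word_val p (1 # r) + (p - 3)"
    using nzm_word_carry_succ[OF p d_r] by metis
  then show ?thesis
    using nzm_code_word_val[of p "replicate (Suc (Suc j)) 1 @ u"] p by simp
qed

lemma next_code_ending_in_one:
  assumes p: "p \<ge> 5" and "2 \<le> \<mu>" and "hd (nzm_code p \<mu>) = 1"
  obtains g where "g = p - 2 \<or> g = p - 3"
    and "\<And>k. \<mu> < k \<Longrightarrow> k < \<mu> + g \<Longrightarrow> hd (nzm_code p k) \<noteq> 1"
    and "hd (nzm_code p (\<mu> + g)) = 1"
    and "take 2 (nzm_code p (\<mu> + g)) = [1, 1] \<longleftrightarrow> g = p - 3"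
proof -
  obtain r where nzm: "nzm_word p (1 # r)" and val: "word_val p (1 # r) = \<mu>"
    using nzm_code_spec[OF p, of \<mu>] assms(2,3) by (cases "nzm_code p \<mu>") auto
  have low_digits: "hd (nzm_code p k) \<noteq> 1" if "\<mu> < k" "k \<le> \<mu> + (p - 4)" for k
    using nzm_code_replace_last_digit[OF p nzm, of "k - \<mu> + 1"] that val by simp
  show thesis
  proof (cases "admissible p True r")
    case True
    obtain b r' where r: "r = b # r'"
      using val assms(2) by (cases r) auto
    with True have "b \<noteq> 0" by auto
    note codes = nzm_code_after_one_free_tail
        [OF p nzm[unfolded r] True[unfolded r], unfolded r [symmetric] val]
    show thesis
    proof (rule that[of "p - 2"])
      show "hd (nzm_code p k) \<noteq> 1" if "\<mu> < k" "k < \<mu> + (p - 2)" for k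
        using low_digits[of k] codes(1) that p by (cases "k = \<mu> + (p - 3)") auto
    qed (use codes(2) \<open>b \<noteq> 0\<close> in auto)
  next
    case False
    have ends_11: "take 2 (nzm_code p (\<mu> + (p - 3))) = [1, 1]"
      using nzm_code_after_one_blocked_tail[OF p nzm False] val by simp
    then have "hd (nzm_code p (\<mu> + (p - 3))) = 1"
      by (cases "nzm_code p (\<mu> + (p - 3))") auto
    with ends_11 show thesis
      using that[of "p - 3"] low_digits by simp
  qed
qed

theorem lemma11:
  fixes p :: int and n :: nat and \<mu> \<nu> :: int
  assumes "p \<ge> 5"
    and "Msum p (int n - 1) + 1 \<le> \<mu>" and "\<mu> < \<nu>" and "\<nu> \<le> Msum p (int n)"
    and "hd (nzm_code p \<mu>) = 1" and "hd (nzm_code p \<nu>) = 1"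
    and "\<forall>k. \<mu> < k \<and> k < \<nu> \<longrightarrow> hd (nzm_code p k) \<noteq> 1"
  shows "(\<nu> - \<mu> = p - 3 \<longleftrightarrow> take 2 (nzm_code p \<nu>) = [1, 1])
       \<and> (take 2 (nzm_code p \<nu>) \<noteq> [1, 1] \<longrightarrow> \<nu> - \<mu> = p - 2)"
proof -
  have "2 \<le> \<mu>"
  proof (cases n)
    case 0
    then show ?thesis
      using assms(2-4) by (simp add: Msum_def)
  next
    case (Suc m)
    then show ?thesis
      using assms(1,2) Msum_ge_one[of p "int m"] by simp
  qed
  then obtain g where g: "g = p - 2 \<or> g = p - 3"
    and between: "\<And>k. \<mu> < k \<Longrightarrow> k < \<mu> + g \<Longrightarrow> hd (nzm_code p k) \<noteq> 1"
    and next_one: "hd (nzm_code p (\<mu> + g)) = 1"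
    and ends_11: "take 2 (nzm_code p (\<mu> + g)) = [1, 1] \<longleftrightarrow> g = p - 3"
    using next_code_ending_in_one assms(1,5) by blast
  have "\<nu> = \<mu> + g"
  proof (rule ccontr)
    assume "\<nu> \<noteq> \<mu> + g"
    then consider "\<nu> < \<mu> + g" | "\<mu> + g < \<nu>" by linarith
    then show False
      using between[of \<nu>] next_one assms(1,3,6,7) g by cases auto
  qed
  then show ?thesis
    using g ends_11 by auto
qed

end
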